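(* Let $\mathbf P$ be a finite convex collection of bitiles and $f\in L^2(\mathbb R_+)$ with $\operatorname{size}_f(\mathbf P)>0$. Then $\mathbf P=\mathbf P_{hi}\cup\mathbf P_{lo}$ (disjoint union) where (i) $\mathbf P_{hi}$ and $\mathbf P_{lo}$ are both convex; (ii) $\operatorname{size}_f(\mathbf P_{lo})\le\frac12\operatorname{size}_f(\mathbf P)$; (iii) $\mathbf P_{hi}$ is a convex forest whose trees $T\in\mathcal F$ satisfy $$\sum_{T\in\mathcal F}|I_T|\lesssim\operatorname{size}_f(\mathbf P)^{-2}\|f\|_2^2,$$ with an absolute implicit constant.
   Context: Notation. $\mathbb R_+=[0,\infty)$. $\mathcal D_+$ denotes the set of dyadic intervals $[2^jm,2^j(m+1))$ with $j\in\mathbb Z$, $m\in\mathbb Z_{\ge 0}$. The Walsh functions are $w_0=1_{[0,1)}$, $w_{2n}(x)=w_n(2x)+w_n(2x-1)$, $w_{2n+1}(x)=w_n(2x)-w_n(2x-1)$ ($n\ge 0$). A tile is a rectangle $p=I_p\times\omega_p\subset\mathbb R_+^2$ with $I_p,\omega_p\in\mathcal D_+$ and $|I_p||\omega_p|=1$; if $p=[2^jm,2^j(m+1))\times[2^{-j}n,2^{-j}(n+1))$ its Walsh wave packet is $W_p(x)=2^{-j/2}w_n(2^{-j}x-m)$. A bitile is $P=I_P\times\omega_P$ with $I_P,\omega_P\in\mathcal D_+$ and $|I_P||\omega_P|=2$; $\omega_{P_l},\omega_{P_u}$ are the left and right halves of $\omega_P$, and $P_l=I_P\times\omega_{P_l}$,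 $P_u=I_P\times\omega_{P_u}$ are tiles. $\mathbb P_{all}$ is the set of all bitiles. For bitiles, $P\le P'$ means $I_P\subset I_{P'}$ and $\omega_{P'}\subset\omega_P$. A collection $\mathbf P$ of bitiles is convex if $P,P''\in\mathbf P$, $P'\in\mathbb P_{all}$ and $P\le P'\le P''$ imply $P'\in\mathbf P$. For a single bitile, $\Pi_Pf=\langle f,W_{P_u}\rangle W_{P_u}+\langle f,W_{P_l}\rangle W_{P_l}$. A tree $T$ with top data $(I_T,\xi_T)$, where $I_T\in\mathcal D_+$ and $\xi_T\in\mathbb R_+$ is not a dyadic rational, is a collection of bitiles with $I_P\subset I_T$ and $\xi_T\in\omega_P$ for all $P\in T$. A forest is a finite collection of bitiles which is a disjoint union of convex trees $T\in\mathcal F$ (the trees together with their top data are part of the data of the forest); it is a convex forest if moreover the whole collection is convex. Size: for a collection $\mathbf P$ of bitiles, $\operatorname{size}_f(\mathbf P)=\sup_{P\in\mathbf P}\|\Pi_Pf\|_2/|I_P|^{1/2}$. *)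

theory Defs
  imports "HOL-Analysis.Analysis"
begin

type_synonym dyadic = "int \<times> nat"

definition dint :: "dyadic \<Rightarrow> real set" where
  "dint D = (case D of (j, m) \<Rightarrow> {2 powi j * real m ..< 2 powi j * (real m + 1)})"

definition dlen :: "dyadic \<Rightarrow> real" where
  "dlen D = 2 powi (fst D)"

function walsh :: "nat \<Rightarrow> real \<Rightarrow> real" where
  "walsh n x =
     (if n = 0 then indicator {0..<1} x
      else walsh (n div 2) (2 * x)
           + (if even n then 1 else -1) * walsh (n div 2) (2 * x - 1))"
  by auto
termination by (relation "Wellfounded.measure fst") auto

text \<open>A tile [2^j m, 2^j (m+1)) x [2^-j n, 2^-j (n+1)) is encoded by (j, m, n).\<close>
type_synonym tile = "int \<times> nat \<times> nat"

definition wave_packet :: "tile \<Rightarrow> real \<Rightarrow> real" where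
  "wave_packet p x = (case p of (j, m, n) \<Rightarrow>
      2 powr (- real_of_int j / 2) * walsh n (2 powi (- j) * x - real m))"

text \<open>A bitile I_P x omega_P with |I_P| = 2^j, |omega_P| = 2^(1-j), I_P = [2^j m, 2^j(m+1)),
  omega_P = [2^(1-j) n, 2^(1-j)(n+1)) is encoded by (j, m, n).  Every triple is a bitile,
  so the type (int x nat x nat) is P_all.\<close>
type_synonym bitile = "int \<times> nat \<times> nat"

definition I_bt :: "bitile \<Rightarrow> dyadic" where
  "I_bt P = (case P of (j, m, n) \<Rightarrow> (j, m))"

definition omega_bt :: "bitile \<Rightarrow> dyadic" where
  "omega_bt P = (case P of (j, m, n) \<Rightarrow> (1 - j, n))"

definition lower_tile :: "bitile \<Rightarrow> tile" where
  "lower_tile P = (case P of (j, m, n) \<Rightarrow> (j, m, 2 * n))"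

definition upper_tile :: "bitile \<Rightarrow> tile" where
  "upper_tile P = (case P of (j, m, n) \<Rightarrow> (j, m, 2 * n + 1))"

definition bt_le :: "bitile \<Rightarrow> bitile \<Rightarrow> bool" where
  "bt_le P P' \<longleftrightarrow> dint (I_bt P) \<subseteq> dint (I_bt P') \<and> dint (omega_bt P') \<subseteq> dint (omega_bt P)"

definition convex_bt :: "bitile set \<Rightarrow> bool" where
  "convex_bt \<PP> \<longleftrightarrow> (\<forall>P\<in>\<PP>. \<forall>P''\<in>\<PP>. \<forall>P'. bt_le P P' \<and> bt_le P' P'' \<longrightarrow> P' \<in> \<PP>)"

definition L2_Rplus :: "(real \<Rightarrow> complex) \<Rightarrow> bool" where
  "L2_Rplus f \<longleftrightarrow> f \<in> borel_measurable (lebesgue_on {0..})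
     \<and> integrable (lebesgue_on {0..}) (\<lambda>x. (cmod (f x))\<^sup>2)"

definition L2_norm_Rplus :: "(real \<Rightarrow> complex) \<Rightarrow> real" where
  "L2_norm_Rplus f = sqrt (integral\<^sup>L (lebesgue_on {0..}) (\<lambda>x. (cmod (f x))\<^sup>2))"

definition inner_Rplus :: "(real \<Rightarrow> complex) \<Rightarrow> (real \<Rightarrow> real) \<Rightarrow> complex" where
  "inner_Rplus f g = integral\<^sup>L (lebesgue_on {0..}) (\<lambda>x. f x * complex_of_real (g x))"

definition Pi_bt :: "bitile \<Rightarrow> (real \<Rightarrow> complex) \<Rightarrow> real \<Rightarrow> complex" where
  "Pi_bt P f x =
     inner_Rplus f (wave_packet (upper_tile P)) * complex_of_real (wave_packet (upper_tile P) x)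
   + inner_Rplus f (wave_packet (lower_tile P)) * complex_of_real (wave_packet (lower_tile P) x)"

text \<open>size_f(P) = sup over P of ||Pi_P f||_2 / |I_P|^(1/2); the supremum of the empty family
  is taken to be 0 (all terms are nonnegative).\<close>
definition size_f :: "(real \<Rightarrow> complex) \<Rightarrow> bitile set \<Rightarrow> real" where
  "size_f f \<PP> = Sup (insert 0 ((\<lambda>P. L2_norm_Rplus (Pi_bt P f) / sqrt (dlen (I_bt P))) ` \<PP>))"

definition dyadic_rational :: "real \<Rightarrow> bool" where
  "dyadic_rational x \<longleftrightarrow> (\<exists>k::int. \<exists>j::nat. x = real_of_int k / 2 ^ j)"

definition is_tree :: "bitile set \<Rightarrow> dyadic \<Rightarrow> real \<Rightarrow> bool" where
  "is_tree T IT xi \<longleftrightarrow> xi \<ge> 0 \<and> \<not> dyadic_rational xi \<and>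
     (\<forall>P\<in>T. dint (I_bt P) \<subseteq> dint IT \<and> xi \<in> dint (omega_bt P))"

text \<open>A forest: a finite collection of bitiles written as the disjoint union of the convex
  trees in the (finite) family F, each tree carried together with its top data.\<close>
definition is_forest :: "bitile set \<Rightarrow> (bitile set \<times> dyadic \<times> real) set \<Rightarrow> bool" where
  "is_forest \<PP> F \<longleftrightarrow> finite \<PP> \<and> finite F \<and>
     (\<forall>(T, IT, xi)\<in>F. is_tree T IT xi \<and> convex_bt T) \<and>
     (\<forall>A\<in>F. \<forall>B\<in>F. A \<noteq> B \<longrightarrow> fst A \<inter> fst B = {}) \<and>
     \<PP> = (\<Union>A\<in>F. fst A)"

definition is_convex_forest :: "bitile set \<Rightarrow> (bitile set \<times> dyadic \<times> real) set \<Rightarrow> bool" where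
  "is_convex_forest \<PP> F \<longleftrightarrow> is_forest \<PP> F \<and> convex_bt \<PP>"

end

theory Submission
  imports Defs
begin

text \<open>Let s be the size of the collection and M the set of maximal elements among its bitiles
  of size greater than s/2. The bitiles lying below some element of M form a down-set of the
  convex collection, so both it and its complement are convex, and the complement has size at
  most s/2. Assigning each of its bitiles to one element of M above it yields convex trees
  topped by the elements of M. These are pairwise incomparable, so the wave packets of their
  upper and lower tiles form an orthonormal family; by Bessel's inequality the energies
  |<f, W_Pl>|^2 + |<f, W_Pu>|^2 over P in M add up to at most the squared norm of f, while
  each of them exceeds s^2 |I_P| / 8.\<close>

section \<open>Walsh functions\<close>

definition walsh_sign :: "nat \<Rightarrow> real" where
  "walsh_sign n = (if even n then 1 else -1)"

lemma walsh_rec: "walsh n x = walsh (n div 2) (2 * x) + walsh_sign n * walsh (n div 2) (2 * x - 1)"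
proof (cases "n = 0")
  case True
  then show ?thesis by (simp add: walsh_sign_def indicator_def)
next
  case False
  then show ?thesis by (subst walsh.simps) (simp add: walsh_sign_def)
qed

declare walsh.simps[simp del]

lemma walsh_eq_0_outside: "x \<notin> {0..<1} \<Longrightarrow> walsh n x = 0"
proof (induction n arbitrary: x rule: less_induct)
  case (less n)
  show ?case
  proof (cases "n = 0")
    case True
    then show ?thesis using less.prems by (simp add: walsh.simps)
  next
    case False
    then have "walsh (n div 2) (2 * x) = 0" "walsh (n div 2) (2 * x - 1) = 0"
      using less.IH less.prems by auto
    then show ?thesis by (simp add: walsh_rec[of n x])
  qed
qed

lemma walsh_left_half: "0 \<le> x \<Longrightarrow> x < 1/2 \<Longrightarrow> walsh n x = walsh (n div 2) (2 * x)"
  using walsh_rec[of n x] walsh_eq_0_outside[of "2 * x - 1" "n div 2"] by simp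

lemma walsh_right_half: "1/2 \<le> x \<Longrightarrow> walsh n x = walsh_sign n * walsh (n div 2) (2 * x - 1)"
  using walsh_rec[of n x] walsh_eq_0_outside[of "2 * x" "n div 2"] by simp

lemma abs_walsh_inside: "x \<in> {0..<1} \<Longrightarrow> \<bar>walsh n x\<bar> = 1"
proof (induction n arbitrary: x rule: less_induct)
  case (less n)
  show ?case
  proof (cases "n = 0")
    case True
    then show ?thesis using less.prems by (simp add: walsh.simps)
  next
    case False
    then have IH: "\<And>y. y \<in> {0..<1} \<Longrightarrow> \<bar>walsh (n div 2) y\<bar> = 1" using less.IH by simp
    show ?thesis
    proof (cases "x < 1/2")
      case True
      then show ?thesis using walsh_left_half[of x n] IH[of "2 * x"] less.prems by auto
    next
      case False
      then show ?thesis using walsh_right_half[of x n] IH[of "2 * x - 1"] less.prems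
        by (auto simp: walsh_sign_def abs_mult)
    qed
  qed
qed

lemma abs_walsh_le_indicator: "\<bar>walsh n x\<bar> \<le> indicator {0..<1} x"
  using abs_walsh_inside[of x n] walsh_eq_0_outside[of x n] by (cases "x \<in> {0..<1}") auto

lemma abs_walsh_le_1: "\<bar>walsh n x\<bar> \<le> 1"
  using abs_walsh_inside[of x n] walsh_eq_0_outside[of x n] by (cases "x \<in> {0..<1}") auto

lemma walsh_mult_self: "walsh n x * walsh n x = indicator {0..<1} x"
proof (cases "x \<in> {0..<1}")
  case True
  then have "\<bar>walsh n x\<bar> * \<bar>walsh n x\<bar> = 1" using abs_walsh_inside[OF True] by simp
  then show ?thesis using True by (simp only: abs_mult_self_eq) simp
qed (simp add: walsh_eq_0_outside)

lemma borel_measurable_walsh[measurable]: "walsh n \<in> borel_measurable borel"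
proof (induction n rule: less_induct)
  case (less n)
  show ?case
  proof (cases "n = 0")
    case True
    then show ?thesis by (simp add: walsh.simps[abs_def])
  next
    case False
    then have IH: "walsh (n div 2) \<in> borel_measurable borel" using less.IH by simp
    have "walsh n = (\<lambda>x. walsh (n div 2) (2 * x) + walsh_sign n * walsh (n div 2) (2 * x - 1))"
      using walsh_rec by blast
    then show ?thesis
      by (simp only:) (intro borel_measurable_add borel_measurable_times measurable_compose[OF _ IH]; simp)
  qed
qed

lemma walsh_on_dyadic_subinterval:
  assumes "k < 2 ^ s"
  shows "\<exists>e. \<bar>e\<bar> = 1 \<and> (\<forall>y. real k / 2 ^ s \<le> y \<and> y < (real k + 1) / 2 ^ s \<longrightarrow>
     walsh n y = e * walsh (n div 2 ^ s) (2 ^ s * y - real k))"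
  using assms
proof (induction s arbitrary: k)
  case 0
  then show ?case by (intro exI[of _ 1]) auto
next
  case (Suc s)
  define k1 k0 where "k1 = k div 2" and "k0 = k mod 2"
  have k: "k = 2 * k1 + k0" unfolding k1_def k0_def by simp
  have "k1 < 2 ^ s" using Suc.prems unfolding k1_def by (simp add: less_mult_imp_div_less)
  from Suc.IH[OF this] obtain e where e: "\<bar>e\<bar> = 1"
    and he: "\<And>y. real k1 / 2 ^ s \<le> y \<Longrightarrow> y < (real k1 + 1) / 2 ^ s \<Longrightarrow>
      walsh n y = e * walsh (n div 2 ^ s) (2 ^ s * y - real k1)" by blast
  define e' where "e' = e * (if k0 = 0 then 1 else walsh_sign (n div 2 ^ s))"
  show ?case
  proof (intro exI[of _ e'] conjI allI impI)
    show "\<bar>e'\<bar> = 1" using e by (auto simp: e'_def walsh_sign_def abs_mult)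
    fix y assume y: "real k / 2 ^ Suc s \<le> y \<and> y < (real k + 1) / 2 ^ Suc s"
    have y': "real k \<le> 2 ^ Suc s * y" "2 ^ Suc s * y < real k + 1"
      using y by (simp_all add: field_simps)
    have "real k1 / 2 ^ s \<le> y" "y < (real k1 + 1) / 2 ^ s"
      using y' k unfolding k0_def by (auto simp: field_simps)
    define z where "z = 2 ^ s * y - real k1"
    have hz: "walsh n y = e * walsh (n div 2 ^ s) z" using he[OF \<open>_ \<le> y\<close> \<open>y < _\<close>] by (simp add: z_def)
    have zk: "2 * z - real k0 = 2 ^ Suc s * y - real k" using k by (simp add: z_def algebra_simps)
    have nd: "n div 2 ^ Suc s = n div 2 ^ s div 2" by (simp only: power_Suc2 div_mult2_eq)
    show "walsh n y = e' * walsh (n div 2 ^ Suc s) (2 ^ Suc s * y - real k)"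
    proof (cases "k0 = 0")
      case True
      then have "0 \<le> z" "z < 1/2" using y' k by (auto simp: z_def field_simps)
      then show ?thesis using walsh_left_half[of z "n div 2 ^ s"] hz zk True nd by (simp add: e'_def)
    next
      case False
      then have "k0 = 1" unfolding k0_def by simp
      then have "1/2 \<le> z" using y' k by (auto simp: z_def field_simps)
      then show ?thesis using walsh_right_half[of z "n div 2 ^ s"] hz zk \<open>k0 = 1\<close> nd by (simp add: e'_def)
    qed
  qed
qed

lemma integrable_walsh_mult: "integrable lborel (\<lambda>x. walsh a x * walsh b x)"
proof (rule Bochner_Integration.integrable_bound)
  show "integrable lborel (indicator {0..<1::real} :: real \<Rightarrow> real)"
    by (intro integrable_real_indicator) auto
  show "AE x in lborel. norm (walsh a x * walsh b x) \<le> norm (indicator {0..<1::real} x :: real)"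
  proof (intro AE_I2)
    fix x :: real
    have "\<bar>walsh a x\<bar> * \<bar>walsh b x\<bar> \<le> indicator {0..<1} x * indicator {0..<1} x"
      by (intro mult_mono abs_walsh_le_indicator) auto
    then show "norm (walsh a x * walsh b x) \<le> norm (indicator {0..<1::real} x :: real)"
      by (auto simp: abs_mult indicator_def split: if_splits)
  qed
qed simp

lemma walsh_mult_walsh:
  "walsh a x * walsh b x = walsh (a div 2) (2 * x) * walsh (b div 2) (2 * x)
     + (walsh_sign a * walsh_sign b) * (walsh (a div 2) (2 * x - 1) * walsh (b div 2) (2 * x - 1))"
proof -
  define a' b' where "a' = a div 2" and "b' = b div 2"
  have "2 * x \<notin> {0..<1} \<or> 2 * x - 1 \<notin> {0..<1}" by auto
  then have cross: "walsh a' (2 * x) * walsh b' (2 * x - 1) = 0" "walsh a' (2 * x - 1) * walsh b' (2 * x) = 0"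
    by (metis mult_zero_left mult_zero_right walsh_eq_0_outside)+
  have "walsh a x * walsh b x = walsh a' (2 * x) * walsh b' (2 * x)
      + walsh_sign a * walsh_sign b * (walsh a' (2 * x - 1) * walsh b' (2 * x - 1))
      + walsh_sign b * (walsh a' (2 * x) * walsh b' (2 * x - 1))
      + walsh_sign a * (walsh a' (2 * x - 1) * walsh b' (2 * x))"
    unfolding walsh_rec[of a x] walsh_rec[of b x] a'_def[symmetric] b'_def[symmetric]
    by (simp add: algebra_simps)
  then show ?thesis using cross unfolding a'_def b'_def by simp
qed

lemma integral_walsh_mult_rec:
  "(\<integral>x. walsh a x * walsh b x \<partial>lborel)
     = (1 + walsh_sign a * walsh_sign b) / 2 * (\<integral>x. walsh (a div 2) x * walsh (b div 2) x \<partial>lborel)"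
proof -
  define a' b' where "a' = a div 2" and "b' = b div 2"
  define J where "J = (\<integral>x. walsh a' x * walsh b' x \<partial>lborel)"
  have halves: "(\<integral>x. walsh a' (2 * x) * walsh b' (2 * x) \<partial>lborel) = J / 2"
    "(\<integral>x. walsh a' (2 * x - 1) * walsh b' (2 * x - 1) \<partial>lborel) = J / 2"
    using lborel_integral_real_affine[of 2 "\<lambda>x. walsh a' x * walsh b' x" 0]
      lborel_integral_real_affine[of 2 "\<lambda>x. walsh a' x * walsh b' x" "-1"]
    by (simp_all add: J_def)
  have "integrable lborel (\<lambda>x. walsh a' (2 * x) * walsh b' (2 * x))"
    "integrable lborel (\<lambda>x. walsh a' (2 * x - 1) * walsh b' (2 * x - 1))"
    using lborel_integrable_real_affine[OF integrable_walsh_mult[of a' b'], of 2 0]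
      lborel_integrable_real_affine[OF integrable_walsh_mult[of a' b'], of 2 "-1"]
    by simp_all
  then have "(\<integral>x. walsh a x * walsh b x \<partial>lborel) = J / 2 + (walsh_sign a * walsh_sign b) * (J / 2)"
    unfolding walsh_mult_walsh[of a _ b] a'_def[symmetric] b'_def[symmetric] by (simp add: halves)
  then show ?thesis by (simp add: J_def a'_def b'_def field_simps)
qed

lemma integral_walsh_mult_neq: "a \<noteq> b \<Longrightarrow> (\<integral>x. walsh a x * walsh b x \<partial>lborel) = 0"
proof (induction "a + b" arbitrary: a b rule: less_induct)
  case less
  show ?case
  proof (cases "a div 2 = b div 2")
    case True
    then have "odd a \<noteq> odd b" using less.prems by (metis dvd_mult_div_cancel odd_two_times_div_two_succ)
    then show ?thesis by (auto simp: integral_walsh_mult_rec[of a b] walsh_sign_def)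
  next
    case False
    have "a div 2 + b div 2 < a + b" using less.prems by linarith
    with False show ?thesis by (simp add: integral_walsh_mult_rec[of a b] less.hyps)
  qed
qed

lemma integral_walsh_mult: "(\<integral>x. walsh a x * walsh b x \<partial>lborel) = (if a = b then 1 else 0)"
  by (simp add: integral_walsh_mult_neq walsh_mult_self)

definition wave_packet_height :: "int \<Rightarrow> real" where
  "wave_packet_height j = 2 powr (- real_of_int j / 2)"

lemma wave_packet_eq: "wave_packet (j, m, n) x = wave_packet_height j * walsh n (2 powi (- j) * x - real m)"
  by (simp add: wave_packet_def wave_packet_height_def)

lemma wave_packet_height_pos: "wave_packet_height j > 0"
  by (simp add: wave_packet_height_def)

lemma wave_packet_height_square: "wave_packet_height j * wave_packet_height j = 2 powi (- j)"
proof -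
  have "wave_packet_height j * wave_packet_height j = 2 powr (real_of_int (- j))"
    unfolding wave_packet_height_def by (simp add: powr_add[symmetric])
  also have "\<dots> = 2 powi (- j)" by (rule powr_real_of_int') auto
  finally show ?thesis .
qed

lemma borel_measurable_wave_packet[measurable]: "wave_packet p \<in> borel_measurable borel"
proof -
  obtain j m n where "p = (j, m, n)" by (cases p) auto
  then have "wave_packet p = (\<lambda>x. wave_packet_height j * walsh n (2 powi (- j) * x - real m))"
    using wave_packet_eq by auto
  then show ?thesis by simp
qed

lemma wave_packet_nonzero_imp:
  "wave_packet (j, m, n) x \<noteq> 0 \<Longrightarrow> 0 \<le> 2 powi (- j) * x - real m \<and> 2 powi (- j) * x - real m < 1"
  using walsh_eq_0_outside[of "2 powi (- j) * x - real m" n] by (auto simp: wave_packet_eq)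

lemma wave_packet_eq_0_neg: "x < 0 \<Longrightarrow> wave_packet p x = 0"
proof (rule ccontr)
  obtain j m n where p: "p = (j, m, n)" by (cases p) auto
  assume "x < 0" "wave_packet p x \<noteq> 0"
  then have "0 \<le> 2 powi (- j) * x - real m" using wave_packet_nonzero_imp p by blast
  moreover have "2 powi (- j) * x < 0" using \<open>x < 0\<close> by (simp add: mult_pos_neg)
  ultimately show False by simp
qed

lemma integrable_wave_packet_mult: "integrable lborel (\<lambda>x. wave_packet p x * wave_packet q x)"
proof -
  obtain j m n where p: "p = (j, m, n)" by (cases p) auto
  obtain j' m' n' where q: "q = (j', m', n')" by (cases q) auto
  define ind where "ind x = (indicator {0..<1::real} (- real m + 2 powi (- j) * x) :: real)" for x
  have "integrable lborel ind"
    unfolding ind_def by (rule lborel_integrable_real_affine) (auto intro: integrable_real_indicator)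
  then have "integrable lborel (\<lambda>x. wave_packet_height j * wave_packet_height j' * ind x)"
    by (rule integrable_mult_right)
  then show ?thesis
  proof (rule Bochner_Integration.integrable_bound)
    show "AE x in lborel. norm (wave_packet p x * wave_packet q x) \<le> norm (wave_packet_height j * wave_packet_height j' * ind x)"
    proof (intro AE_I2)
      fix x
      have "\<bar>wave_packet p x\<bar> \<le> wave_packet_height j * ind x"
        using abs_walsh_le_indicator[of n "2 powi (- j) * x - real m"] wave_packet_height_pos[of j]
        by (simp add: p wave_packet_eq ind_def abs_mult)
      moreover have "\<bar>wave_packet q x\<bar> \<le> wave_packet_height j'"
        using abs_walsh_le_1[of n' "2 powi (- j') * x - real m'"] wave_packet_height_pos[of j']
        by (simp add: q wave_packet_eq abs_mult)
      ultimately have "\<bar>wave_packet p x\<bar> * \<bar>wave_packet q x\<bar> \<le> wave_packet_height j * ind x * wave_packet_height j'"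
        using wave_packet_height_pos[of j] by (intro mult_mono) (auto simp: ind_def)
      then show "norm (wave_packet p x * wave_packet q x) \<le> norm (wave_packet_height j * wave_packet_height j' * ind x)"
        using wave_packet_height_pos[of j] wave_packet_height_pos[of j'] by (simp add: abs_mult ind_def algebra_simps)
    qed
  qed simp
qed

lemma integral_wave_packet_mult_same_interval:
  "(\<integral>x. wave_packet (j, m, a) x * wave_packet (j, m, b) x \<partial>lborel) = (if a = b then 1 else 0)"
proof -
  define c :: real where "c = 2 powi j"
  have c: "c > 0" "2 powi (- j) * c = 1" unfolding c_def by (simp_all add: power_int_minus)
  have "(\<integral>x. wave_packet (j, m, a) x * wave_packet (j, m, b) x \<partial>lborel)
     = c * (\<integral>y. wave_packet (j, m, a) (c * real m + c * y) * wave_packet (j, m, b) (c * real m + c * y) \<partial>lborel)"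
    using lborel_integral_real_affine[of c "\<lambda>x. wave_packet (j, m, a) x * wave_packet (j, m, b) x" "c * real m"] c
    by simp
  also have "(\<lambda>y. wave_packet (j, m, a) (c * real m + c * y) * wave_packet (j, m, b) (c * real m + c * y))
      = (\<lambda>y. 2 powi (- j) * (walsh a y * walsh b y))"
  proof
    fix y
    have "2 powi (- j) * (c * real m + c * y) = (2 powi (- j) * c) * (real m + y)" by (simp add: algebra_simps)
    then have "2 powi (- j) * (c * real m + c * y) - real m = y" using c by simp
    then show "wave_packet (j, m, a) (c * real m + c * y) * wave_packet (j, m, b) (c * real m + c * y)
        = 2 powi (- j) * (walsh a y * walsh b y)"
      unfolding wave_packet_eq using wave_packet_height_square[of j] by (simp add: algebra_simps)
  qed
  also have "c * (\<integral>y. 2 powi (- j) * (walsh a y * walsh b y) \<partial>lborel) = (if a = b then 1 else 0)"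
    using c by (simp add: integral_walsh_mult mult.commute)
  finally show ?thesis .
qed

lemma powi_neg_eq_divide_power:
  fixes x :: real
  assumes "j \<le> j'"
  shows "2 powi (- j') * x = 2 powi (- j) * x / 2 ^ nat (j' - j)"
proof -
  have "(2::real) powi (- j) = 2 powi (- j' + int (nat (j' - j)))" using assms by simp
  also have "\<dots> = 2 powi (- j') * 2 powi int (nat (j' - j))" by (rule power_int_add) simp
  also have "\<dots> = 2 powi (- j') * 2 ^ nat (j' - j)" by (simp only: power_int_of_nat)
  finally show ?thesis by simp
qed

lemma wave_packet_mult_eq_0_of_div_neq:
  assumes "j \<le> j'" "m div 2 ^ nat (j' - j) \<noteq> m'"
  shows "wave_packet (j, m, a) x * wave_packet (j', m', b) x = 0"
proof (rule ccontr)
  define s where "s = nat (j' - j)"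
  assume nz: "wave_packet (j, m, a) x * wave_packet (j', m', b) x \<noteq> 0"
  define y w where "y = 2 powi (- j) * x - real m" and "w = 2 powi (- j') * x"
  have y: "0 \<le> y" "y < 1" using wave_packet_nonzero_imp[of j m a x] nz by (auto simp: y_def)
  have w: "real m' \<le> w" "w < real m' + 1"
    using wave_packet_nonzero_imp[of j' m' b x] nz by (auto simp: w_def)
  have "y + real m = w * 2 ^ s"
    using powi_neg_eq_divide_power[OF assms(1), of x] by (simp add: w_def y_def s_def)
  then have "real m' * 2 ^ s \<le> y + real m" "y + real m < (real m' + 1) * 2 ^ s"
    using w by (simp_all add: mult_right_mono)
  then have "real (m' * 2 ^ s) < real (m + 1)" "real m < real (2 ^ s * Suc m')"
    using y by (simp_all add: algebra_simps)
  then have "2 ^ s * m' \<le> m" "m < 2 ^ s * Suc m'"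
    by (simp_all only: of_nat_less_iff) (simp add: mult.commute)
  then have "m div 2 ^ s = m'" by (rule div_nat_eqI)
  then show False using assms(2) by (simp add: s_def)
qed

lemma wave_packet_on_finer_interval:
  assumes "j \<le> j'" "m div 2 ^ nat (j' - j) = m'"
  shows "\<exists>K. \<forall>x. wave_packet (j, m, a) x \<noteq> 0 \<longrightarrow>
     wave_packet (j', m', b) x = K * wave_packet (j, m, b div 2 ^ nat (j' - j)) x"
proof -
  define s k where "s = nat (j' - j)" and "k = m mod 2 ^ s"
  have s0: "(0::real) < 2 ^ s" by simp
  have mk: "m = m' * 2 ^ s + k" unfolding k_def using assms(2) by (metis div_mult_mod_eq s_def)
  obtain e where he: "\<And>y. real k / 2 ^ s \<le> y \<Longrightarrow> y < (real k + 1) / 2 ^ s \<Longrightarrow>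
       walsh b y = e * walsh (b div 2 ^ s) (2 ^ s * y - real k)"
    using walsh_on_dyadic_subinterval[of k s b] unfolding k_def by auto
  have "wave_packet (j', m', b) x = e * wave_packet_height j' / wave_packet_height j * wave_packet (j, m, b div 2 ^ s) x"
    if "wave_packet (j, m, a) x \<noteq> 0" for x
  proof -
    define y z where "y = 2 powi (- j) * x - real m" and "z = 2 powi (- j') * x - real m'"
    have y: "0 \<le> y" "y < 1" using wave_packet_nonzero_imp[of j m a x] that by (auto simp: y_def)
    have "2 powi (- j') * x = (y + real m) / 2 ^ s"
      using powi_neg_eq_divide_power[OF assms(1), of x] by (simp add: y_def s_def)
    then have zz: "z = (y + real k) / 2 ^ s" using mk s0 by (simp add: z_def field_simps)
    have "real k / 2 ^ s \<le> z" "z < (real k + 1) / 2 ^ s"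
      using zz y s0 by (simp_all add: divide_right_mono divide_strict_right_mono)
    from he[OF this] have "walsh b z = e * walsh (b div 2 ^ s) y" using zz s0 by simp
    then show ?thesis
      using wave_packet_height_pos[of j] by (simp add: wave_packet_eq z_def[symmetric] y_def[symmetric])
  qed
  then show ?thesis unfolding s_def by blast
qed

lemma integral_wave_packet_mult_eq_0:
  assumes "j \<le> j'" and "m div 2 ^ nat (j' - j) = m' \<longrightarrow> b div 2 ^ nat (j' - j) \<noteq> a"
  shows "(\<integral>x. wave_packet (j, m, a) x * wave_packet (j', m', b) x \<partial>lborel) = 0"
proof (cases "m div 2 ^ nat (j' - j) = m'")
  case False
  then have "(\<lambda>x. wave_packet (j, m, a) x * wave_packet (j', m', b) x) = (\<lambda>x. 0)"
    using wave_packet_mult_eq_0_of_div_neq[OF assms(1)] by blast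
  then show ?thesis by simp
next
  case True
  define b' where "b' = b div 2 ^ nat (j' - j)"
  obtain K where K: "\<And>x. wave_packet (j, m, a) x \<noteq> 0 \<Longrightarrow> wave_packet (j', m', b) x = K * wave_packet (j, m, b') x"
    using wave_packet_on_finer_interval[OF assms(1) True, of a b] unfolding b'_def by blast
  have pointwise: "wave_packet (j, m, a) x * wave_packet (j', m', b) x
      = K * (wave_packet (j, m, a) x * wave_packet (j, m, b') x)" for x
    by (cases "wave_packet (j, m, a) x = 0") (simp_all add: K)
  have "(\<integral>x. wave_packet (j, m, a) x * wave_packet (j', m', b) x \<partial>lborel)
      = K * (\<integral>x. wave_packet (j, m, a) x * wave_packet (j, m, b') x \<partial>lborel)"
    unfolding pointwise by simp
  also have "\<dots> = 0"
    using assms(2) True integral_wave_packet_mult_same_interval[of j m a b'] by (simp add: b'_def)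
  finally show ?thesis .
qed

section \<open>Bessel's inequality in L^2(R_+)\<close>

abbreviation lebesgue_Rplus :: "real measure" where
  "lebesgue_Rplus \<equiv> lebesgue_on {0..}"

lemma
  fixes h :: "real \<Rightarrow> real"
  assumes "h \<in> borel_measurable borel" "integrable lborel h" "\<And>x. x < 0 \<Longrightarrow> h x = 0"
  shows integrable_Rplus_of_lborel: "integrable lebesgue_Rplus h"
    and integral_Rplus_eq_lborel: "integral\<^sup>L lebesgue_Rplus h = integral\<^sup>L lborel h"
proof -
  have Rplus: "{0::real..} \<inter> space lebesgue \<in> sets lebesgue" by simp
  have hm: "h \<in> borel_measurable lborel" using assms(1) by simp
  have eq: "(\<lambda>x. indicator {0..} x *\<^sub>R h x) = h"
    using assms(3) by (auto simp: indicator_def fun_eq_iff not_le)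
  have "integrable lebesgue h" using integrable_completion[OF hm] assms(2) by simp
  then show "integrable lebesgue_Rplus h"
    unfolding integrable_restrict_space[OF Rplus] eq .
  show "integral\<^sup>L lebesgue_Rplus h = integral\<^sup>L lborel h"
    unfolding integral_restrict_space[OF Rplus] eq using integral_completion[OF hm] by simp
qed

lemma integrable_Rplus_wave_packet_mult: "integrable lebesgue_Rplus (\<lambda>x. wave_packet p x * wave_packet q x)"
  and integral_Rplus_wave_packet_mult:
    "(\<integral>x. wave_packet p x * wave_packet q x \<partial>lebesgue_Rplus) = (\<integral>x. wave_packet p x * wave_packet q x \<partial>lborel)"
  using integrable_Rplus_of_lborel[OF _ integrable_wave_packet_mult]
    integral_Rplus_eq_lborel[OF _ integrable_wave_packet_mult] wave_packet_eq_0_neg by auto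

lemma borel_measurable_Rplus_wave_packet[measurable]: "wave_packet p \<in> borel_measurable lebesgue_Rplus"
  by (intro measurable_restrict_space1 measurable_completion) simp

lemma bessel_inequality:
  fixes e :: "'i \<Rightarrow> 'a \<Rightarrow> real" and g :: "'a \<Rightarrow> real"
  assumes "finite K"
    and int_ee: "\<And>i k. i \<in> K \<Longrightarrow> k \<in> K \<Longrightarrow> integrable M (\<lambda>x. e i x * e k x)"
    and orthonormal: "\<And>i k. i \<in> K \<Longrightarrow> k \<in> K \<Longrightarrow> (\<integral>x. e i x * e k x \<partial>M) = (if i = k then 1 else 0)"
    and int_ge: "\<And>i. i \<in> K \<Longrightarrow> integrable M (\<lambda>x. g x * e i x)"
    and int_gg: "integrable M (\<lambda>x. g x * g x)"
  shows "(\<Sum>i\<in>K. (\<integral>x. g x * e i x \<partial>M)\<^sup>2) \<le> (\<integral>x. g x * g x \<partial>M)"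
proof -
  define c where "c i = (\<integral>x. g x * e i x \<partial>M)" for i
  define h where "h x = g x - (\<Sum>i\<in>K. c i * e i x)" for x
  have hh: "h x * h x = g x * g x - 2 * (\<Sum>i\<in>K. c i * (g x * e i x))
      + (\<Sum>i\<in>K. \<Sum>k\<in>K. (c i * c k) * (e i x * e k x))" for x
  proof -
    have "(\<Sum>i\<in>K. c i * e i x) * (\<Sum>i\<in>K. c i * e i x) = (\<Sum>i\<in>K. \<Sum>k\<in>K. (c i * c k) * (e i x * e k x))"
      by (simp add: sum_product algebra_simps)
    moreover have "g x * (\<Sum>i\<in>K. c i * e i x) = (\<Sum>i\<in>K. c i * (g x * e i x))"
      by (simp add: sum_distrib_left algebra_simps)
    ultimately show ?thesis unfolding h_def by (simp add: algebra_simps)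
  qed
  have int1: "integrable M (\<lambda>x. 2 * (\<Sum>i\<in>K. c i * (g x * e i x)))"
    using int_ge by (intro integrable_mult_right Bochner_Integration.integrable_sum) auto
  have int2: "integrable M (\<lambda>x. \<Sum>i\<in>K. \<Sum>k\<in>K. (c i * c k) * (e i x * e k x))"
    using int_ee by (intro Bochner_Integration.integrable_sum integrable_mult_right) auto
  have I1: "(\<integral>x. 2 * (\<Sum>i\<in>K. c i * (g x * e i x)) \<partial>M) = 2 * (\<Sum>i\<in>K. (c i)\<^sup>2)"
    using int_ge by (simp add: Bochner_Integration.integral_sum c_def power2_eq_square)
  have "(\<integral>x. (\<Sum>i\<in>K. \<Sum>k\<in>K. (c i * c k) * (e i x * e k x)) \<partial>M)
      = (\<Sum>i\<in>K. \<Sum>k\<in>K. (c i * c k) * (if i = k then 1 else 0))"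
    using int_ee orthonormal
    by (simp add: Bochner_Integration.integral_sum integrable_mult_right Bochner_Integration.integrable_sum)
  also have "\<dots> = (\<Sum>i\<in>K. (c i)\<^sup>2)"
    using \<open>finite K\<close> by (simp add: power2_eq_square if_distrib sum.delta cong: if_cong)
  finally have I2: "(\<integral>x. (\<Sum>i\<in>K. \<Sum>k\<in>K. (c i * c k) * (e i x * e k x)) \<partial>M) = (\<Sum>i\<in>K. (c i)\<^sup>2)" .
  have "0 \<le> (\<integral>x. h x * h x \<partial>M)" by simp
  also have "\<dots> = (\<integral>x. g x * g x \<partial>M) - 2 * (\<Sum>i\<in>K. (c i)\<^sup>2) + (\<Sum>i\<in>K. (c i)\<^sup>2)"
    unfolding hh using int_gg int1 int2 I1 I2 by simp
  finally show ?thesis unfolding c_def by simp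
qed

lemma integrable_mult_of_squares:
  fixes g w :: "'a \<Rightarrow> real"
  assumes "g \<in> borel_measurable M" "w \<in> borel_measurable M"
    "integrable M (\<lambda>x. g x * g x)" "integrable M (\<lambda>x. w x * w x)"
  shows "integrable M (\<lambda>x. g x * w x)"
proof (rule Bochner_Integration.integrable_bound[of _ "\<lambda>x. g x * g x + w x * w x"])
  show "AE x in M. norm (g x * w x) \<le> norm (g x * g x + w x * w x)"
  proof (intro AE_I2)
    fix x
    have "2 * (\<bar>g x\<bar> * \<bar>w x\<bar>) \<le> g x * g x + w x * w x"
      using sum_squares_bound[of "\<bar>g x\<bar>" "\<bar>w x\<bar>"] by (simp add: power2_eq_square mult.assoc)
    moreover have "0 \<le> \<bar>g x\<bar> * \<bar>w x\<bar>" by simp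
    ultimately show "norm (g x * w x) \<le> norm (g x * g x + w x * w x)"
      using abs_ge_self[of "g x * g x + w x * w x"] unfolding real_norm_def abs_mult by linarith
  qed
qed (use assms in simp_all)

lemma cmod_power2_Re_Im: "(cmod z)\<^sup>2 = Re z * Re z + Im z * Im z"
  using cmod_power2[of z] by (simp add: power2_eq_square)

context
  fixes f :: "real \<Rightarrow> complex"
  assumes f: "L2_Rplus f"
begin

lemma borel_measurable_L2_Rplus[measurable]: "f \<in> borel_measurable lebesgue_Rplus"
  using f unfolding L2_Rplus_def by simp

lemma integrable_Re_square: "integrable lebesgue_Rplus (\<lambda>x. Re (f x) * Re (f x))"
  and integrable_Im_square: "integrable lebesgue_Rplus (\<lambda>x. Im (f x) * Im (f x))"
  using f unfolding L2_Rplus_def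
  by (auto intro: Bochner_Integration.integrable_bound[of _ "\<lambda>x. (cmod (f x))\<^sup>2"] AE_I2
      simp: cmod_power2_Re_Im)

lemma integrable_L2_Rplus_mult_wave_packet:
  "integrable lebesgue_Rplus (\<lambda>x. f x * complex_of_real (wave_packet p x))"
proof -
  have Re_Im: "integrable lebesgue_Rplus (\<lambda>x. Re (f x) * wave_packet p x)"
    "integrable lebesgue_Rplus (\<lambda>x. Im (f x) * wave_packet p x)"
    by (rule integrable_mult_of_squares;
        simp add: integrable_Re_square integrable_Im_square integrable_Rplus_wave_packet_mult)+
  have "integrable lebesgue_Rplus
      (\<lambda>x. complex_of_real (Re (f x) * wave_packet p x) + \<i> * complex_of_real (Im (f x) * wave_packet p x))"
    by (intro Bochner_Integration.integrable_add integrable_mult_right integrable_of_real Re_Im)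
  also have "(\<lambda>x. complex_of_real (Re (f x) * wave_packet p x) + \<i> * complex_of_real (Im (f x) * wave_packet p x))
      = (\<lambda>x. f x * complex_of_real (wave_packet p x))"
    by (auto simp: complex_eq_iff)
  finally show ?thesis .
qed

lemma
  shows Re_inner_Rplus: "Re (inner_Rplus f (wave_packet p)) = (\<integral>x. Re (f x) * wave_packet p x \<partial>lebesgue_Rplus)"
    and Im_inner_Rplus: "Im (inner_Rplus f (wave_packet p)) = (\<integral>x. Im (f x) * wave_packet p x \<partial>lebesgue_Rplus)"
  unfolding inner_Rplus_def
  using integral_bounded_linear[OF bounded_linear_Re integrable_L2_Rplus_mult_wave_packet[of p]]
    integral_bounded_linear[OF bounded_linear_Im integrable_L2_Rplus_mult_wave_packet[of p]]
  by simp_all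

lemma L2_norm_Rplus_square:
  "(L2_norm_Rplus f)\<^sup>2 = (\<integral>x. Re (f x) * Re (f x) \<partial>lebesgue_Rplus) + (\<integral>x. Im (f x) * Im (f x) \<partial>lebesgue_Rplus)"
proof -
  have "(L2_norm_Rplus f)\<^sup>2 = (\<integral>x. (cmod (f x))\<^sup>2 \<partial>lebesgue_Rplus)"
    unfolding L2_norm_Rplus_def by simp
  also have "\<dots> = (\<integral>x. Re (f x) * Re (f x) + Im (f x) * Im (f x) \<partial>lebesgue_Rplus)"
    by (simp only: cmod_power2_Re_Im)
  finally show ?thesis using integrable_Re_square integrable_Im_square by simp
qed

lemma bessel_wave_packets:
  assumes "finite K"
    and orthonormal: "\<And>p q. p \<in> K \<Longrightarrow> q \<in> K \<Longrightarrow>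
      (\<integral>x. wave_packet p x * wave_packet q x \<partial>lborel) = (if p = q then 1 else 0)"
  shows "(\<Sum>p\<in>K. (cmod (inner_Rplus f (wave_packet p)))\<^sup>2) \<le> (L2_norm_Rplus f)\<^sup>2"
proof -
  have bessel: "(\<Sum>p\<in>K. (\<integral>x. h x * wave_packet p x \<partial>lebesgue_Rplus)\<^sup>2) \<le> (\<integral>x. h x * h x \<partial>lebesgue_Rplus)"
    if "h \<in> borel_measurable lebesgue_Rplus" "integrable lebesgue_Rplus (\<lambda>x. h x * h x)" for h
  proof (rule bessel_inequality[OF \<open>finite K\<close>])
    show "integrable lebesgue_Rplus (\<lambda>x. h x * wave_packet p x)" for p
      by (rule integrable_mult_of_squares) (simp_all add: that integrable_Rplus_wave_packet_mult)
  qed (simp_all add: that integrable_Rplus_wave_packet_mult integral_Rplus_wave_packet_mult orthonormal)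
  have "(\<Sum>p\<in>K. (cmod (inner_Rplus f (wave_packet p)))\<^sup>2)
      = (\<Sum>p\<in>K. (\<integral>x. Re (f x) * wave_packet p x \<partial>lebesgue_Rplus)\<^sup>2)
        + (\<Sum>p\<in>K. (\<integral>x. Im (f x) * wave_packet p x \<partial>lebesgue_Rplus)\<^sup>2)"
    by (simp add: cmod_power2 Re_inner_Rplus Im_inner_Rplus sum.distrib)
  also have "\<dots> \<le> (L2_norm_Rplus f)\<^sup>2"
    unfolding L2_norm_Rplus_square
    by (intro add_mono bessel) (simp_all add: integrable_Re_square integrable_Im_square)
  finally show ?thesis .
qed

end

definition bitile_energy :: "(real \<Rightarrow> complex) \<Rightarrow> bitile \<Rightarrow> real" where
  "bitile_energy f P = (cmod (inner_Rplus f (wave_packet (lower_tile P))))\<^sup>2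
     + (cmod (inner_Rplus f (wave_packet (upper_tile P))))\<^sup>2"

lemma L2_norm_Pi_bt_square_le: "(L2_norm_Rplus (Pi_bt P f))\<^sup>2 \<le> 2 * bitile_energy f P"
proof -
  define a b where "a = inner_Rplus f (wave_packet (upper_tile P))" and "b = inner_Rplus f (wave_packet (lower_tile P))"
  define u l where "u = wave_packet (upper_tile P)" and "l = wave_packet (lower_tile P)"
  have "(L2_norm_Rplus (Pi_bt P f))\<^sup>2 = (\<integral>x. (cmod (Pi_bt P f x))\<^sup>2 \<partial>lebesgue_Rplus)"
    unfolding L2_norm_Rplus_def by simp
  also have "\<dots> \<le> (\<integral>x. 2 * (cmod a)\<^sup>2 * (u x * u x) + 2 * (cmod b)\<^sup>2 * (l x * l x) \<partial>lebesgue_Rplus)"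
  proof (rule integral_mono')
    show "integrable lebesgue_Rplus (\<lambda>x. 2 * (cmod a)\<^sup>2 * (u x * u x) + 2 * (cmod b)\<^sup>2 * (l x * l x))"
      unfolding u_def l_def using integrable_Rplus_wave_packet_mult by simp
    fix x
    have "Pi_bt P f x = a * complex_of_real (u x) + b * complex_of_real (l x)"
      unfolding Pi_bt_def a_def b_def u_def l_def by simp
    then have "cmod (Pi_bt P f x) \<le> cmod a * \<bar>u x\<bar> + cmod b * \<bar>l x\<bar>"
      using norm_triangle_ineq[of "a * complex_of_real (u x)" "b * complex_of_real (l x)"]
      by (simp add: norm_mult)
    then have "(cmod (Pi_bt P f x))\<^sup>2 \<le> (cmod a * \<bar>u x\<bar> + cmod b * \<bar>l x\<bar>)\<^sup>2"
      by (simp add: power_mono)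
    also have "\<dots> \<le> 2 * (cmod a * \<bar>u x\<bar>)\<^sup>2 + 2 * (cmod b * \<bar>l x\<bar>)\<^sup>2"
      using sum_squares_bound[of "cmod a * \<bar>u x\<bar>" "cmod b * \<bar>l x\<bar>"] by (simp add: power2_sum)
    also have "\<dots> = 2 * (cmod a)\<^sup>2 * (u x * u x) + 2 * (cmod b)\<^sup>2 * (l x * l x)"
      by (simp add: power2_eq_square abs_mult_self_eq algebra_simps)
    finally show "(cmod (Pi_bt P f x))\<^sup>2 \<le> 2 * (cmod a)\<^sup>2 * (u x * u x) + 2 * (cmod b)\<^sup>2 * (l x * l x)" .
  qed simp
  also have "\<dots> = 2 * bitile_energy f P"
    unfolding u_def l_def a_def b_def bitile_energy_def
    using integrable_Rplus_wave_packet_mult integral_Rplus_wave_packet_mult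
      integral_wave_packet_mult_same_interval
    by (cases P) (simp add: upper_tile_def lower_tile_def)
  finally show ?thesis .
qed

definition bitile_size :: "(real \<Rightarrow> complex) \<Rightarrow> bitile \<Rightarrow> real" where
  "bitile_size f P = L2_norm_Rplus (Pi_bt P f) / sqrt (dlen (I_bt P))"

lemma size_f_le: "0 \<le> c \<Longrightarrow> (\<And>P. P \<in> X \<Longrightarrow> bitile_size f P \<le> c) \<Longrightarrow> size_f f X \<le> c"
  unfolding size_f_def bitile_size_def[symmetric] by (rule cSup_least) auto

lemma dlen_le_bitile_energy:
  assumes "0 < t" "t < bitile_size f P"
  shows "dlen (I_bt P) \<le> 2 / t\<^sup>2 * bitile_energy f P"
proof -
  define d L where "d = dlen (I_bt P)" and "L = L2_norm_Rplus (Pi_bt P f)"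
  have "0 < d" unfolding d_def dlen_def by simp
  then have "t * sqrt d < L" using assms(2) by (simp add: bitile_size_def d_def L_def less_divide_eq)
  then have "(t * sqrt d)\<^sup>2 < L\<^sup>2" using assms(1) \<open>0 < d\<close> by (intro power_strict_mono) auto
  then have "t\<^sup>2 * d < 2 * bitile_energy f P"
    using L2_norm_Pi_bt_square_le[of P f] \<open>0 < d\<close> by (simp add: L_def power_mult_distrib)
  then show ?thesis using assms(1) by (simp add: d_def field_simps)
qed

section \<open>The order on bitiles\<close>

lemma dint_subset_imp_scale_le: "dint (j, m) \<subseteq> dint (j', m') \<Longrightarrow> j \<le> j'"
  and dint_subset_same_scale: "dint (j, m) \<subseteq> dint (j, m') \<Longrightarrow> m = m'"
proof -
  have ne: "\<not> 2 powi j * (real m + 1) \<le> 2 powi j * real m" for j :: int and m :: nat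
    by simp
  show "j \<le> j'" if "dint (j, m) \<subseteq> dint (j', m')"
  proof (rule ccontr)
    assume "\<not> j \<le> j'"
    then have "(2::real) powi j' < 2 powi j" by (intro power_int_strict_increasing) auto
    moreover have "2 powi j' * real m' \<le> 2 powi j * real m" "2 powi j * (real m + 1) \<le> 2 powi j' * (real m' + 1)"
      using that ne[of j m] unfolding dint_def by auto
    ultimately show False by (simp add: algebra_simps)
  qed
  show "m = m'" if "dint (j, m) \<subseteq> dint (j, m')"
  proof -
    have "2 powi j * real m' \<le> 2 powi j * real m" "2 powi j * (real m + 1) \<le> 2 powi j * (real m' + 1)"
      using that ne[of j m] unfolding dint_def by auto
    then show ?thesis by (simp add: mult_le_cancel_left_pos)
  qed
qed

lemma dint_subset_of_div:
  assumes "j \<le> j'" "m div 2 ^ nat (j' - j) = m'"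
  shows "dint (j, m) \<subseteq> dint (j', m')"
proof -
  define s where "s = nat (j' - j)"
  have "j' = j + int s" using assms(1) unfolding s_def by simp
  then have pj: "(2::real) powi j' = 2 powi j * 2 ^ s" by (simp add: power_int_add)
  have "m' * 2 ^ s + m mod 2 ^ s = m"
    using assms(2) div_mult_mod_eq[of m "2 ^ s"] unfolding s_def[symmetric] by simp
  moreover have "m mod 2 ^ s < 2 ^ s" by simp
  ultimately have "m' * 2 ^ s \<le> m" "m < 2 ^ s + m' * 2 ^ s" by linarith+
  then have "real (m' * 2 ^ s) \<le> real m" "real (m + 1) \<le> real (2 ^ s + m' * 2 ^ s)"
    by (simp_all only: of_nat_le_iff)
  then have "real m' * 2 ^ s \<le> real m" "real m + 1 \<le> 2 ^ s * (real m' + 1)"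
    by (simp_all add: algebra_simps)
  moreover have "(0::real) < 2 powi j" by simp
  ultimately have "2 powi j' * real m' \<le> 2 powi j * real m" "2 powi j * (real m + 1) \<le> 2 powi j' * (real m' + 1)"
    unfolding pj by (simp_all add: ac_simps)
  then show ?thesis unfolding dint_def ivl_subset by simp
qed

lemma bt_le_refl: "bt_le P P"
  by (simp add: bt_le_def)

lemma bt_le_trans: "bt_le P Q \<Longrightarrow> bt_le Q R \<Longrightarrow> bt_le P R"
  by (auto simp: bt_le_def)

lemma bt_le_imp_fst_le: "bt_le P Q \<Longrightarrow> fst P \<le> fst Q"
  by (cases P; cases Q) (auto simp: bt_le_def I_bt_def dest: dint_subset_imp_scale_le)

lemma bt_le_imp_eq: "bt_le P Q \<Longrightarrow> fst P = fst Q \<Longrightarrow> P = Q"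
  by (cases P; cases Q)
    (auto simp: bt_le_def I_bt_def omega_bt_def dest: dint_subset_same_scale)

definition maximal_bt :: "bitile set \<Rightarrow> bitile set" where
  "maximal_bt S = {Q \<in> S. \<forall>Q' \<in> S. bt_le Q Q' \<longrightarrow> Q' = Q}"

definition below_bt :: "bitile set \<Rightarrow> bitile set \<Rightarrow> bitile set" where
  "below_bt \<PP> M = {P \<in> \<PP>. \<exists>Q \<in> M. bt_le P Q}"

lemma convex_below_bt: "convex_bt \<PP> \<Longrightarrow> convex_bt (below_bt \<PP> M)"
  unfolding convex_bt_def below_bt_def by (blast intro: bt_le_trans)

lemma convex_diff_below_bt: "convex_bt \<PP> \<Longrightarrow> convex_bt (\<PP> - below_bt \<PP> M)"
  unfolding convex_bt_def below_bt_def by (blast intro: bt_le_trans)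

lemma exists_maximal_bt_above:
  assumes "finite S" "P \<in> S"
  shows "\<exists>Q \<in> maximal_bt S. bt_le P Q"
proof -
  define A where "A = {Q \<in> S. bt_le P Q}"
  have A: "finite A" "P \<in> A" using assms by (auto simp: A_def bt_le_refl)
  have "Max (fst ` A) \<in> fst ` A" using A by (intro Max_in) auto
  then obtain Q where Q: "Q \<in> A" "fst Q = Max (fst ` A)" by auto
  have "Q' = Q" if "Q' \<in> S" "bt_le Q Q'" for Q'
  proof -
    have "Q' \<in> A" using that Q(1) by (auto simp: A_def intro: bt_le_trans)
    then have "fst Q' \<le> fst Q" using A Q by simp
    then show ?thesis using bt_le_imp_fst_le[OF \<open>bt_le Q Q'\<close>] bt_le_imp_eq[OF \<open>bt_le Q Q'\<close>] by simp
  qed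
  then show ?thesis using Q(1) unfolding maximal_bt_def A_def by blast
qed

lemma subset_below_maximal_bt: "finite S \<Longrightarrow> S \<subseteq> \<PP> \<Longrightarrow> S \<subseteq> below_bt \<PP> (maximal_bt S)"
  using exists_maximal_bt_above by (auto simp: below_bt_def)

section \<open>Orthogonality of incomparable bitiles\<close>

definition half_tile :: "bitile \<Rightarrow> nat \<Rightarrow> tile" where
  "half_tile P c = (case P of (j, m, n) \<Rightarrow> (j, m, 2 * n + c))"

lemma lower_tile_eq_half_tile: "lower_tile P = half_tile P 0"
  and upper_tile_eq_half_tile: "upper_tile P = half_tile P 1"
  by (cases P; simp add: lower_tile_def upper_tile_def half_tile_def)+

lemma half_tile_inj: "c \<le> 1 \<Longrightarrow> c' \<le> 1 \<Longrightarrow> half_tile P c = half_tile P' c' \<Longrightarrow> P = P' \<and> c = c'"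
  by (cases P; cases P') (auto simp: half_tile_def, presburger+)

text \<open>The frequency condition of integral_wave_packet_mult_eq_0 fails only if the frequency
  interval of the coarser bitile lies in that of the finer one, so only comparable bitiles can
  have non-orthogonal half tiles.\<close>

lemma integral_half_tile_mult_eq_0:
  assumes "fst P \<le> fst P'" "\<not> bt_le P P'" "c \<le> 1" "c' \<le> 1"
  shows "(\<integral>x. wave_packet (half_tile P c) x * wave_packet (half_tile P' c') x \<partial>lborel) = 0"
proof -
  obtain j m n j' m' n' where P: "P = (j, m, n)" and P': "P' = (j', m', n')" by (cases P; cases P')
  define s where "s = nat (j' - j)"
  have "j \<le> j'" using assms(1) P P' by simp
  have "(2 * n' + c') div 2 ^ s \<noteq> 2 * n + c" if "m div 2 ^ s = m'"
  proof
    assume a: "(2 * n' + c') div 2 ^ s = 2 * n + c"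
    have "(2 * n' + c') div 2 ^ s div 2 = (2 * n' + c') div 2 div 2 ^ s"
      by (metis div_mult2_eq mult.commute)
    moreover have "(2 * n' + c') div 2 = n'" "(2 * n + c) div 2 = n" using assms(3,4) by simp_all
    ultimately have "n' div 2 ^ s = n" using a by simp
    moreover have "nat ((1 - j) - (1 - j')) = s" unfolding s_def by simp
    ultimately have "dint (1 - j', n') \<subseteq> dint (1 - j, n)"
      using dint_subset_of_div[of "1 - j'" "1 - j" n' n] \<open>j \<le> j'\<close> by simp
    moreover have "dint (j, m) \<subseteq> dint (j', m')"
      using dint_subset_of_div[OF \<open>j \<le> j'\<close> that[unfolded s_def]] .
    ultimately have "bt_le P P'" by (simp add: bt_le_def I_bt_def omega_bt_def P P')
    then show False using assms(2) by simp
  qed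
  then show ?thesis
    unfolding P P' half_tile_def using integral_wave_packet_mult_eq_0[OF \<open>j \<le> j'\<close>] by (simp add: s_def)
qed

lemma integral_half_tile_mult:
  assumes "bt_le P P' \<longrightarrow> P = P'" "bt_le P' P \<longrightarrow> P = P'" "c \<le> 1" "c' \<le> 1"
  shows "(\<integral>x. wave_packet (half_tile P c) x * wave_packet (half_tile P' c') x \<partial>lborel)
     = (if half_tile P c = half_tile P' c' then 1 else 0)"
proof (cases "P = P'")
  case True
  obtain j m n where "P = (j, m, n)" by (cases P)
  then show ?thesis
    using True integral_wave_packet_mult_same_interval[of j m "2 * n + c" "2 * n + c'"]
    by (simp add: half_tile_def)
next
  case False
  then have "half_tile P c \<noteq> half_tile P' c'" using half_tile_inj assms(3,4) by blast
  moreover have "(\<integral>x. wave_packet (half_tile P c) x * wave_packet (half_tile P' c') x \<partial>lborel) = 0"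
  proof (cases "fst P \<le> fst P'")
    case True
    then show ?thesis using integral_half_tile_mult_eq_0 assms False by blast
  next
    case False
    then show ?thesis using integral_half_tile_mult_eq_0[of P' P c' c] assms \<open>P \<noteq> P'\<close>
      by (simp add: mult.commute)
  qed
  ultimately show ?thesis by simp
qed

lemma sum_bitile_energy_le:
  assumes "L2_Rplus f" "finite M" and antichain: "\<And>Q Q'. Q \<in> M \<Longrightarrow> Q' \<in> M \<Longrightarrow> bt_le Q Q' \<Longrightarrow> Q = Q'"
  shows "(\<Sum>Q\<in>M. bitile_energy f Q) \<le> (L2_norm_Rplus f)\<^sup>2"
proof -
  define K where "K = case_prod half_tile ` (M \<times> {0, 1})"
  have inj: "inj_on (case_prod half_tile) (M \<times> {0, 1})"
  proof (rule inj_onI)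
    fix x y assume xy: "x \<in> M \<times> {0, 1}" "y \<in> M \<times> {0, 1}" "case_prod half_tile x = case_prod half_tile y"
    obtain P c P' c' where "x = (P, c)" "y = (P', c')" by (cases x, cases y)
    with xy have "c \<le> 1" "c' \<le> 1" "half_tile P c = half_tile P' c'" by auto
    then show "x = y" using half_tile_inj \<open>x = (P, c)\<close> \<open>y = (P', c')\<close> by blast
  qed
  let ?e = "\<lambda>p. (cmod (inner_Rplus f (wave_packet p)))\<^sup>2"
  have "(\<Sum>Q\<in>M. bitile_energy f Q) = (\<Sum>Q\<in>M. \<Sum>c\<in>{0, 1}. ?e (half_tile Q c))"
    by (simp add: bitile_energy_def lower_tile_eq_half_tile upper_tile_eq_half_tile)
  also have "\<dots> = (\<Sum>(Q, c)\<in>M \<times> {0, 1}. ?e (half_tile Q c))"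
    by (rule sum.cartesian_product)
  also have "\<dots> = (\<Sum>p\<in>K. ?e p)"
    unfolding K_def sum.reindex[OF inj] by (simp add: case_prod_unfold comp_def)
  also have "\<dots> \<le> (L2_norm_Rplus f)\<^sup>2"
  proof (rule bessel_wave_packets[OF assms(1)])
    show "finite K" unfolding K_def using assms(2) by simp
    have half_tile_of_K: "\<exists>P c. P \<in> M \<and> c \<le> 1 \<and> p = half_tile P c" if "p \<in> K" for p
      using that unfolding K_def by fastforce
    fix p q assume "p \<in> K" "q \<in> K"
    then obtain P c P' c' where "P \<in> M" "P' \<in> M" "c \<le> 1" "c' \<le> 1"
      and "p = half_tile P c" "q = half_tile P' c'" using half_tile_of_K by meson
    then show "(\<integral>x. wave_packet p x * wave_packet q x \<partial>lborel) = (if p = q then 1 else 0)"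
      using integral_half_tile_mult antichain by metis
  qed
  finally show ?thesis .
qed

lemma sum_dlen_le:
  assumes "L2_Rplus f" "finite M" "\<And>Q Q'. Q \<in> M \<Longrightarrow> Q' \<in> M \<Longrightarrow> bt_le Q Q' \<Longrightarrow> Q = Q'"
    and "0 < t" "\<And>Q. Q \<in> M \<Longrightarrow> t < bitile_size f Q"
  shows "(\<Sum>Q\<in>M. dlen (I_bt Q)) \<le> 2 / t\<^sup>2 * (L2_norm_Rplus f)\<^sup>2"
proof -
  have "(\<Sum>Q\<in>M. dlen (I_bt Q)) \<le> (\<Sum>Q\<in>M. 2 / t\<^sup>2 * bitile_energy f Q)"
    using assms(4,5) by (intro sum_mono dlen_le_bitile_energy)
  also have "\<dots> \<le> 2 / t\<^sup>2 * (L2_norm_Rplus f)\<^sup>2"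
    unfolding sum_distrib_left[symmetric]
    by (intro mult_left_mono sum_bitile_energy_le assms(1-3)) auto
  finally show ?thesis .
qed

section \<open>Trees below maximal bitiles\<close>

lemma exists_non_dyadic_in_dint: "\<exists>x \<in> dint D. 0 \<le> x \<and> \<not> dyadic_rational x"
proof -
  obtain j n where D: "D = (j, n)" by (cases D)
  define a b where "a = 2 powi j * real n" and "b = 2 powi j * (real n + 1)"
  have "a < b" by (simp add: a_def b_def)
  then have "uncountable {a..<b}" by (rule uncountable_half_open_interval_1[THEN iffD2])
  moreover have "{x. dyadic_rational x} = (\<lambda>(k::int, j::nat). real_of_int k / 2 ^ j) ` UNIV"
    by (auto simp: dyadic_rational_def)
  then have "countable {x. dyadic_rational x}" by simp
  ultimately have "\<not> {a..<b} \<subseteq> {x. dyadic_rational x}" using countable_subset by blast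
  then obtain x where "x \<in> {a..<b}" "\<not> dyadic_rational x" by blast
  moreover have "0 \<le> a" by (simp add: a_def)
  with \<open>x \<in> {a..<b}\<close> have "0 \<le> x" by simp
  ultimately show ?thesis by (auto simp: D dint_def a_def b_def)
qed

text \<open>A bitile below several elements of M goes to the tree of the first of them in the
  enumeration to_nat of the countable type of bitiles.\<close>

definition tree_below :: "bitile set \<Rightarrow> bitile set \<Rightarrow> bitile \<Rightarrow> bitile set" where
  "tree_below \<PP> M Q = {P \<in> \<PP>. bt_le P Q \<and> (\<forall>Q' \<in> M. bt_le P Q' \<longrightarrow> to_nat Q \<le> to_nat Q')}"

lemma convex_tree_below: "convex_bt \<PP> \<Longrightarrow> convex_bt (tree_below \<PP> M Q)"
  unfolding convex_bt_def tree_below_def by (blast intro: bt_le_trans)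

lemma tree_below_disjoint:
  "Q \<in> M \<Longrightarrow> Q' \<in> M \<Longrightarrow> Q \<noteq> Q' \<Longrightarrow> tree_below \<PP> M Q \<inter> tree_below \<PP> M Q' = {}"
  by (fastforce simp: tree_below_def dest: antisym)

lemma below_bt_eq_Union_tree_below:
  assumes "finite M"
  shows "below_bt \<PP> M = (\<Union>Q \<in> M. tree_below \<PP> M Q)"
proof
  show "(\<Union>Q \<in> M. tree_below \<PP> M Q) \<subseteq> below_bt \<PP> M"
    by (auto simp: below_bt_def tree_below_def)
  show "below_bt \<PP> M \<subseteq> (\<Union>Q \<in> M. tree_below \<PP> M Q)"
  proof
    fix P assume P: "P \<in> below_bt \<PP> M"
    define C where "C = {Q \<in> M. bt_le P Q}"
    have "finite C" "C \<noteq> {}" using assms P by (auto simp: C_def below_bt_def)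
    then have "Min (to_nat ` C) \<in> to_nat ` C" by (intro Min_in) auto
    then obtain Q where "Q \<in> C" "to_nat Q = Min (to_nat ` C)" by auto
    then have "P \<in> tree_below \<PP> M Q"
      using P \<open>finite C\<close> by (auto simp: tree_below_def C_def below_bt_def)
    then show "P \<in> (\<Union>Q \<in> M. tree_below \<PP> M Q)" using \<open>Q \<in> C\<close> by (auto simp: C_def)
  qed
qed

lemma convex_forest_below_bt:
  assumes "finite \<PP>" "convex_bt \<PP>" "finite M"
  shows "\<exists>F. is_convex_forest (below_bt \<PP> M) F \<and> (\<Sum>(T, IT, xi)\<in>F. dlen IT) \<le> (\<Sum>Q\<in>M. dlen (I_bt Q))"
proof -
  define xi where "xi Q = (SOME x. x \<in> dint (omega_bt Q) \<and> 0 \<le> x \<and> \<not> dyadic_rational x)" for Q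
  have xi: "xi Q \<in> dint (omega_bt Q) \<and> 0 \<le> xi Q \<and> \<not> dyadic_rational (xi Q)" for Q
    unfolding xi_def by (rule someI_ex) (use exists_non_dyadic_in_dint in blast)
  define F where "F = (\<lambda>Q. (tree_below \<PP> M Q, I_bt Q, xi Q)) ` M"
  have tree: "is_tree (tree_below \<PP> M Q) (I_bt Q) (xi Q)" for Q
    using xi[of Q] by (auto simp: is_tree_def tree_below_def bt_le_def)
  have disjoint: "fst A \<inter> fst B = {}" if "A \<in> F" "B \<in> F" "A \<noteq> B" for A B
  proof -
    obtain Q Q' where "Q \<in> M" "Q' \<in> M" "A = (tree_below \<PP> M Q, I_bt Q, xi Q)" "B = (tree_below \<PP> M Q', I_bt Q', xi Q')"
      using \<open>A \<in> F\<close> \<open>B \<in> F\<close> unfolding F_def by blast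
    then show ?thesis using tree_below_disjoint[of Q M Q'] \<open>A \<noteq> B\<close> by auto
  qed
  have "is_convex_forest (below_bt \<PP> M) F"
    unfolding is_convex_forest_def is_forest_def
  proof (intro conjI)
    show "finite (below_bt \<PP> M)" using assms(1) by (simp add: below_bt_def)
    show "finite F" using assms(3) by (simp add: F_def)
    show "\<forall>(T, IT, xi)\<in>F. is_tree T IT xi \<and> convex_bt T"
      using tree convex_tree_below[OF assms(2)] by (auto simp: F_def)
    show "\<forall>A\<in>F. \<forall>B\<in>F. A \<noteq> B \<longrightarrow> fst A \<inter> fst B = {}" using disjoint by blast
    show "below_bt \<PP> M = (\<Union>A\<in>F. fst A)"
      using below_bt_eq_Union_tree_below[OF assms(3)] by (simp add: F_def image_image)
    show "convex_bt (below_bt \<PP> M)" using assms(2) by (rule convex_below_bt)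
  qed
  moreover have "(\<Sum>(T, IT, xi)\<in>F. dlen IT) \<le> (\<Sum>Q\<in>M. dlen (I_bt Q))"
  proof -
    have "(\<Sum>(T, IT, xi)\<in>F. dlen IT)
        \<le> (\<Sum>Q\<in>M. ((\<lambda>(T, IT, xi). dlen IT) \<circ> (\<lambda>Q. (tree_below \<PP> M Q, I_bt Q, xi Q))) Q)"
      unfolding F_def by (rule sum_image_le[OF assms(3)]) (simp add: dlen_def)
    then show ?thesis by simp
  qed
  ultimately show ?thesis by blast
qed

theorem lemma4p3:
  "\<exists>C::real. C > 0 \<and>
     (\<forall>(\<PP>::bitile set) (f::real \<Rightarrow> complex).
        finite \<PP> \<and> convex_bt \<PP> \<and> L2_Rplus f \<and> size_f f \<PP> > 0 \<longrightarrow>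
        (\<exists>Phi Plo F.
           \<PP> = Phi \<union> Plo \<and> Phi \<inter> Plo = {} \<and>
           convex_bt Phi \<and> convex_bt Plo \<and>
           size_f f Plo \<le> size_f f \<PP> / 2 \<and>
           is_convex_forest Phi F \<and>
           (\<Sum>(T, IT, xi)\<in>F. dlen IT) \<le> C * (size_f f \<PP>) powr (-2) * (L2_norm_Rplus f)\<^sup>2))"
proof (intro exI[of _ 8] conjI allI impI)
  fix \<PP> :: "bitile set" and f :: "real \<Rightarrow> complex"
  assume "finite \<PP> \<and> convex_bt \<PP> \<and> L2_Rplus f \<and> size_f f \<PP> > 0"
  then have fin: "finite \<PP>" and cvx: "convex_bt \<PP>" and f: "L2_Rplus f" and s: "size_f f \<PP> > 0"
    by auto
  define S where "S = {P \<in> \<PP>. size_f f \<PP> / 2 < bitile_size f P}"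
  define M where "M = maximal_bt S"
  have "finite S" "finite M" using fin by (auto simp: S_def M_def maximal_bt_def)
  have "S \<subseteq> below_bt \<PP> M" unfolding M_def using \<open>finite S\<close> by (rule subset_below_maximal_bt) (auto simp: S_def)
  then have lo: "size_f f (\<PP> - below_bt \<PP> M) \<le> size_f f \<PP> / 2"
    using s by (intro size_f_le) (auto simp: S_def)
  obtain F where F: "is_convex_forest (below_bt \<PP> M) F"
    and F_len: "(\<Sum>(T, IT, xi)\<in>F. dlen IT) \<le> (\<Sum>Q\<in>M. dlen (I_bt Q))"
    using convex_forest_below_bt[OF fin cvx \<open>finite M\<close>] by blast
  have "(\<Sum>Q\<in>M. dlen (I_bt Q)) \<le> 2 / (size_f f \<PP> / 2)\<^sup>2 * (L2_norm_Rplus f)\<^sup>2"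
    using s by (intro sum_dlen_le[OF f \<open>finite M\<close>]) (auto simp: M_def maximal_bt_def S_def)
  also have "\<dots> = 8 * (size_f f \<PP>) powr (-2) * (L2_norm_Rplus f)\<^sup>2"
    using s by (simp add: powr_minus power2_eq_square field_simps)
  finally have "(\<Sum>(T, IT, xi)\<in>F. dlen IT) \<le> 8 * (size_f f \<PP>) powr (-2) * (L2_norm_Rplus f)\<^sup>2"
    using F_len by linarith
  then show "\<exists>Phi Plo F. \<PP> = Phi \<union> Plo \<and> Phi \<inter> Plo = {} \<and> convex_bt Phi \<and> convex_bt Plo \<and>
      size_f f Plo \<le> size_f f \<PP> / 2 \<and> is_convex_forest Phi F \<and>
      (\<Sum>(T, IT, xi)\<in>F. dlen IT) \<le> 8 * (size_f f \<PP>) powr (-2) * (L2_norm_Rplus f)\<^sup>2"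
    using F lo convex_below_bt[OF cvx] convex_diff_below_bt[OF cvx]
    by (intro exI[of _ "below_bt \<PP> M"] exI[of _ "\<PP> - below_bt \<PP> M"] exI[of _ F] conjI)
      (auto simp: below_bt_def)
qed (simp)

end
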